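(* For a connected undirected unweighted graph $G=(V,E)$ with $N$ vertices, any $S_0\subseteq V$ and any $r>1$, we have $\mathsf{fp}_{r}^{\delta=1/2}(G,S_0)\ge|S_0|/N$.
   Context: Mixed $\delta$-updating on $G$: each vertex holds a mutant (fitness $r$) or wild-type (fitness $1$); $f_S(x)$ is the fitness at $x$ when $S$ is the mutant set. At each step, with probability $\delta$ a death-Birth step: choose $v$ uniformly to die, choose a neighbor $u$ of $v$ with probability proportional to $f_S(u)$, $u$ copies its type onto $v$; with probability $1-\delta$ a Birth-death step: choose $u$ with probability proportional to $f_S(u)$ among all vertices, choose a uniformly random neighbor $v$ of $u$, $u$ copies its type onto $v$. $\mathsf{fp}_r^\delta(G,S_0)$ is the probability all vertices eventually become mutant from initial mutant set $S_0$. *)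

theory Defs
  imports Complex_Main
begin

definition fit :: "real \<Rightarrow> 'a set \<Rightarrow> 'a \<Rightarrow> real" where
  "fit r S x = (if x \<in> S then r else 1)"

definition nbrs :: "'a set \<Rightarrow> ('a \<Rightarrow> 'a \<Rightarrow> bool) \<Rightarrow> 'a \<Rightarrow> 'a set" where
  "nbrs V E v = {u \<in> V. E v u}"

text \<open>u copies its type onto v.\<close>
definition upd :: "'a set \<Rightarrow> 'a \<Rightarrow> 'a \<Rightarrow> 'a set" where
  "upd S u v = (if u \<in> S then insert v S else S - {v})"

text \<open>Probability that the mixed delta-updating process started from mutant set S
  has reached fixation (all vertices mutant, an absorbing state) within n steps.\<close>
fun fix_within :: "'a set \<Rightarrow> ('a \<Rightarrow> 'a \<Rightarrow> bool) \<Rightarrow> real \<Rightarrow> real \<Rightarrow> nat \<Rightarrow> 'a set \<Rightarrow> real" where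
  "fix_within V E r \<delta> 0 S = (if S = V then 1 else 0)"
| "fix_within V E r \<delta> (Suc n) S = (if S = V then 1 else
     \<delta> * (\<Sum>v\<in>V. (1 / real (card V)) *
            (\<Sum>u\<in>nbrs V E v. fit r S u / (\<Sum>w\<in>nbrs V E v. fit r S w)
                              * fix_within V E r \<delta> n (upd S u v)))
   + (1 - \<delta>) * (\<Sum>u\<in>V. fit r S u / (\<Sum>w\<in>V. fit r S w) *
            (\<Sum>v\<in>nbrs V E u. (1 / real (card (nbrs V E u)))
                              * fix_within V E r \<delta> n (upd S u v))))"

text \<open>Fixation probability = probability of eventually reaching the all-mutant state
  = limit (supremum) of the monotone sequence of n-step fixation probabilities.\<close>
definition fp :: "'a set \<Rightarrow> ('a \<Rightarrow> 'a \<Rightarrow> bool) \<Rightarrow> real \<Rightarrow> real \<Rightarrow> 'a set \<Rightarrow> real" where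
  "fp V E r \<delta> S0 = (SUP n. fix_within V E r \<delta> n S0)"

definition connected_graph :: "'a set \<Rightarrow> ('a \<Rightarrow> 'a \<Rightarrow> bool) \<Rightarrow> bool" where
  "connected_graph V E \<longleftrightarrow> (\<forall>x\<in>V. \<forall>y\<in>V. (\<lambda>a b. a \<in> V \<and> b \<in> V \<and> E a b)\<^sup>*\<^sup>* x y)"

end

theory Submission
  imports Defs
begin

(*
  Write the one-step transition operator P of the process as a sum over directed edges (u, v)
  weighted by the probability that u copies its type onto v. At delta = 1/2, across every edge from
  a mutant u to a wild type v, u copies onto v at least as likely as v onto u, so the mutant
  fraction psi(S) = |S|/N is a submartingale: psi <= P psi. The fixation probability L satisfies
  L = P L off the absorbing state V, so D = psi - L satisfies D <= P D there and vanishes at {} and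
  V. A maximiser of D with the most mutants must be {} or V, since otherwise the maximum would
  propagate along a boundary edge of the connected graph to a larger maximiser. Hence D <= 0.
*)

lemma fix_within_full: "fix_within V E r \<delta> n V = 1"
  by (cases n) simp_all

lemma fix_within_empty: "V \<noteq> {} \<Longrightarrow> fix_within V E r \<delta> n {} = 0"
  by (induction n) (simp_all add: upd_def)

lemma fp_full: "fp V E r \<delta> V = 1"
  by (simp add: fp_def fix_within_full)

lemma fp_empty: "V \<noteq> {} \<Longrightarrow> fp V E r \<delta> {} = 0"
  by (simp add: fp_def fix_within_empty)

lemma nbrs_subset: "nbrs V E x \<subseteq> V"
  by (auto simp: nbrs_def)

lemma upd_subset: "S \<subseteq> V \<Longrightarrow> v \<in> V \<Longrightarrow> upd S u v \<subseteq> V"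
  by (auto simp: upd_def)

lemma upd_nbrs_subset: "S \<subseteq> V \<Longrightarrow> v \<in> nbrs V E u \<Longrightarrow> upd S u v \<subseteq> V"
  by (auto simp: nbrs_def upd_def)

lemma card_upd:
  assumes "finite S" "u \<noteq> v"
  shows "real (card (upd S u v)) - real (card S) = of_bool (u \<in> S \<and> v \<notin> S) - of_bool (v \<in> S \<and> u \<notin> S)"
proof -
  have "v \<in> S \<Longrightarrow> 0 < card S" using assms(1) card_gt_0_iff by blast
  then show ?thesis
    using assms by (cases "v \<in> S") (auto simp: upd_def card_insert_if card_Diff_singleton_if)
qed

lemma connected_graph_boundary_edge:
  assumes "connected_graph V E" "S \<subseteq> V" "S \<noteq> {}" "S \<noteq> V"
  shows "\<exists>u\<in>S. \<exists>v\<in>V - S. E u v"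
proof -
  obtain x y where x: "x \<in> S" and y: "y \<in> V - S" using assms by blast
  then have "(\<lambda>a b. a \<in> V \<and> b \<in> V \<and> E a b)\<^sup>*\<^sup>* x y"
    using assms(1,2) unfolding connected_graph_def by blast
  then have "y \<notin> S \<longrightarrow> ?thesis"
    by (induction rule: rtranclp_induct) (use x in auto)
  then show ?thesis using y by blast
qed

lemma connected_graph_nbrs_nonempty:
  assumes "connected_graph V E" "x \<in> V" "y \<in> V" "x \<noteq> y"
  shows "nbrs V E x \<noteq> {}"
  using connected_graph_boundary_edge[of V E "{x}"] assms by (auto simp: nbrs_def)

lemma fit_pos: "0 < r \<Longrightarrow> 0 < fit r S x"
  by (simp add: fit_def)

lemma card_le_sum_fit: "1 \<le> r \<Longrightarrow> real (card A) \<le> (\<Sum>w\<in>A. fit r S w)"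
  using sum_mono[of A "\<lambda>_. 1" "fit r S"] by (simp add: fit_def)

lemma sum_fit_le: "1 \<le> r \<Longrightarrow> (\<Sum>w\<in>A. fit r S w) \<le> r * real (card A)"
  using sum_mono[of A "fit r S" "\<lambda>_. r"] by (simp add: fit_def mult.commute)

text \<open>Probability that one step copies the type of \<open>u\<close> onto \<open>v\<close>: a death-Birth step in which
  \<open>v\<close> dies and \<open>u\<close> wins among its neighbours, or a Birth-death step in which \<open>u\<close> reproduces
  and picks \<open>v\<close>.\<close>

definition copy_prob :: "'a set \<Rightarrow> ('a \<Rightarrow> 'a \<Rightarrow> bool) \<Rightarrow> real \<Rightarrow> real \<Rightarrow> 'a set \<Rightarrow> 'a \<Rightarrow> 'a \<Rightarrow> real" where
  "copy_prob V E r \<delta> S u v =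
     \<delta> * (1 / real (card V) * (fit r S u / (\<Sum>w\<in>nbrs V E v. fit r S w)))
   + (1 - \<delta>) * (fit r S u / (\<Sum>w\<in>V. fit r S w) * (1 / real (card (nbrs V E u))))"

definition step_expectation ::
    "'a set \<Rightarrow> ('a \<Rightarrow> 'a \<Rightarrow> bool) \<Rightarrow> real \<Rightarrow> real \<Rightarrow> ('a set \<Rightarrow> real) \<Rightarrow> 'a set \<Rightarrow> real" where
  "step_expectation V E r \<delta> f S = (\<Sum>u\<in>V. \<Sum>v\<in>nbrs V E u. copy_prob V E r \<delta> S u v * f (upd S u v))"

lemma step_expectation_diff:
  "step_expectation V E r \<delta> f S - step_expectation V E r \<delta> g S = step_expectation V E r \<delta> (\<lambda>T. f T - g T) S"
  by (simp add: step_expectation_def right_diff_distrib sum_subtractf)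

lemma step_expectation_tendsto:
  assumes "\<And>T. T \<subseteq> V \<Longrightarrow> (\<lambda>n. f n T) \<longlonglongrightarrow> g T" "S \<subseteq> V"
  shows "(\<lambda>n. step_expectation V E r \<delta> (f n) S) \<longlonglongrightarrow> step_expectation V E r \<delta> g S"
  unfolding step_expectation_def
  by (intro tendsto_intros assms(1) upd_subset[OF assms(2)]) (auto simp: nbrs_def)

locale moran_graph =
  fixes V :: "'a set" and E :: "'a \<Rightarrow> 'a \<Rightarrow> bool" and r :: real
  assumes finite_V: "finite V" and V_nonempty: "V \<noteq> {}"
    and edge_sym: "\<And>x y. E x y \<Longrightarrow> E y x"
    and edge_irrefl: "\<And>x. \<not> E x x"
    and nbrs_nonempty: "\<And>x. x \<in> V \<Longrightarrow> nbrs V E x \<noteq> {}"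
    and r_pos: "0 < r"
begin

lemma finite_nbrs: "finite (nbrs V E x)"
  using finite_V nbrs_subset by (rule finite_subset[rotated])

lemma card_nbrs_pos: "x \<in> V \<Longrightarrow> 0 < card (nbrs V E x)"
  using nbrs_nonempty finite_nbrs by (simp add: card_gt_0_iff)

lemma sum_fit_nbrs_pos: "x \<in> V \<Longrightarrow> 0 < (\<Sum>w\<in>nbrs V E x. fit r S w)"
  using nbrs_nonempty finite_nbrs by (intro sum_pos) (auto simp: fit_pos r_pos)

lemma sum_fit_pos: "0 < (\<Sum>w\<in>V. fit r S w)"
  using V_nonempty finite_V by (intro sum_pos) (auto simp: fit_pos r_pos)

lemma sum_nbrs_swap: "(\<Sum>v\<in>V. \<Sum>u\<in>nbrs V E v. H u v) = (\<Sum>u\<in>V. \<Sum>v\<in>nbrs V E u. H u v)"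
proof -
  have "(\<Sum>v\<in>V. \<Sum>u\<in>nbrs V E v. H u v) = (\<Sum>v\<in>V. \<Sum>u\<in>V. if E v u then H u v else 0)"
    unfolding nbrs_def using finite_V by (simp add: sum.inter_filter)
  also have "\<dots> = (\<Sum>u\<in>V. \<Sum>v\<in>V. if E v u then H u v else 0)"
    by (rule sum.swap)
  also have "\<dots> = (\<Sum>u\<in>V. \<Sum>v\<in>V. if E u v then H u v else 0)"
    by (intro sum.cong refl) (auto dest: edge_sym)
  also have "\<dots> = (\<Sum>u\<in>V. \<Sum>v\<in>nbrs V E u. H u v)"
    unfolding nbrs_def using finite_V by (simp add: sum.inter_filter)
  finally show ?thesis .
qed

lemma fix_within_Suc:
  "fix_within V E r \<delta> (Suc n) S =
     (if S = V then 1 else step_expectation V E r \<delta> (fix_within V E r \<delta> n) S)"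
proof -
  let ?f = "fix_within V E r \<delta> n"
  let ?A = "\<lambda>u v. 1 / real (card V) * (fit r S u / (\<Sum>w\<in>nbrs V E v. fit r S w))"
  let ?B = "\<lambda>u v. fit r S u / (\<Sum>w\<in>V. fit r S w) * (1 / real (card (nbrs V E u)))"
  have "(\<Sum>v\<in>V. 1 / real (card V) *
           (\<Sum>u\<in>nbrs V E v. fit r S u / (\<Sum>w\<in>nbrs V E v. fit r S w) * ?f (upd S u v)))
      = (\<Sum>v\<in>V. \<Sum>u\<in>nbrs V E v. ?A u v * ?f (upd S u v))"
    by (simp add: sum_distrib_left mult.assoc)
  also have "\<dots> = (\<Sum>u\<in>V. \<Sum>v\<in>nbrs V E u. ?A u v * ?f (upd S u v))"
    by (rule sum_nbrs_swap)
  moreover have "(\<Sum>u\<in>V. fit r S u / (\<Sum>w\<in>V. fit r S w) *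
           (\<Sum>v\<in>nbrs V E u. 1 / real (card (nbrs V E u)) * ?f (upd S u v)))
      = (\<Sum>u\<in>V. \<Sum>v\<in>nbrs V E u. ?B u v * ?f (upd S u v))"
    by (simp add: sum_distrib_left mult.assoc)
  moreover have "step_expectation V E r \<delta> ?f S
      = \<delta> * (\<Sum>u\<in>V. \<Sum>v\<in>nbrs V E u. ?A u v * ?f (upd S u v))
      + (1 - \<delta>) * (\<Sum>u\<in>V. \<Sum>v\<in>nbrs V E u. ?B u v * ?f (upd S u v))"
    unfolding step_expectation_def copy_prob_def
    by (simp only: distrib_right sum.distrib sum_distrib_left mult.assoc)
  ultimately show ?thesis
    by simp
qed

lemma copy_prob_pos:
  assumes "0 \<le> \<delta>" "\<delta> \<le> 1" "u \<in> V" "v \<in> nbrs V E u"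
  shows "0 < copy_prob V E r \<delta> S u v"
proof -
  have "v \<in> V" using assms(4) by (simp add: nbrs_def)
  have death_birth: "0 < 1 / real (card V) * (fit r S u / (\<Sum>w\<in>nbrs V E v. fit r S w))"
    using finite_V V_nonempty sum_fit_nbrs_pos[OF \<open>v \<in> V\<close>]
    by (intro mult_pos_pos divide_pos_pos) (auto simp: card_gt_0_iff fit_pos r_pos)
  have birth_death: "0 < fit r S u / (\<Sum>w\<in>V. fit r S w) * (1 / real (card (nbrs V E u)))"
    using sum_fit_pos card_nbrs_pos[OF assms(3)]
    by (intro mult_pos_pos divide_pos_pos) (auto simp: fit_pos r_pos)
  show ?thesis
  proof (cases "\<delta> = 1")
    case True
    then show ?thesis using death_birth by (simp add: copy_prob_def)
  next
    case False
    then have "0 < 1 - \<delta>" using assms(2) by simp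
    then show ?thesis
      unfolding copy_prob_def
      by (rule add_nonneg_pos[OF mult_nonneg_nonneg[OF assms(1) less_imp_le[OF death_birth]] mult_pos_pos[OF _ birth_death]])
  qed
qed

lemma sum_copy_prob: "(\<Sum>u\<in>V. \<Sum>v\<in>nbrs V E u. copy_prob V E r \<delta> S u v) = 1"
proof -
  let ?N = "real (card V)"
  let ?W = "\<lambda>v. \<Sum>w\<in>nbrs V E v. fit r S w"
  let ?F = "\<Sum>w\<in>V. fit r S w"
  have "(\<Sum>u\<in>V. \<Sum>v\<in>nbrs V E u. 1 / ?N * (fit r S u / ?W v))
      = (\<Sum>v\<in>V. \<Sum>u\<in>nbrs V E v. 1 / ?N * (fit r S u / ?W v))"
    by (rule sum_nbrs_swap[symmetric])
  also have "\<dots> = (\<Sum>v\<in>V. 1 / ?N * (?W v / ?W v))"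
    by (simp only: sum_distrib_left sum_divide_distrib)
  also have "\<dots> = (\<Sum>v\<in>V. 1 / ?N)"
  proof (intro sum.cong refl)
    fix v assume "v \<in> V"
    then have "?W v \<noteq> 0" using sum_fit_nbrs_pos[of v S] by simp
    then show "1 / ?N * (?W v / ?W v) = 1 / ?N" by simp
  qed
  also have "\<dots> = 1"
    using finite_V V_nonempty by simp
  finally have death_birth: "(\<Sum>u\<in>V. \<Sum>v\<in>nbrs V E u. 1 / ?N * (fit r S u / ?W v)) = 1" .
  have "(\<Sum>u\<in>V. \<Sum>v\<in>nbrs V E u. fit r S u / ?F * (1 / real (card (nbrs V E u))))
      = (\<Sum>u\<in>V. fit r S u / ?F)"
    using card_nbrs_pos by (intro sum.cong refl) simp
  also have "\<dots> = ?F / ?F"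
    by (simp only: sum_divide_distrib)
  also have "\<dots> = 1"
    using sum_fit_pos[of S] by simp
  finally have birth_death: "(\<Sum>u\<in>V. \<Sum>v\<in>nbrs V E u. fit r S u / ?F * (1 / real (card (nbrs V E u)))) = 1" .
  have "(\<Sum>u\<in>V. \<Sum>v\<in>nbrs V E u. copy_prob V E r \<delta> S u v)
      = \<delta> * (\<Sum>u\<in>V. \<Sum>v\<in>nbrs V E u. 1 / ?N * (fit r S u / ?W v))
      + (1 - \<delta>) * (\<Sum>u\<in>V. \<Sum>v\<in>nbrs V E u. fit r S u / ?F * (1 / real (card (nbrs V E u))))"
    unfolding copy_prob_def by (simp only: sum.distrib sum_distrib_left)
  then show ?thesis
    unfolding death_birth birth_death by simp
qed

lemma step_expectation_const: "step_expectation V E r \<delta> (\<lambda>_. c) S = c"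
  unfolding step_expectation_def by (simp only: sum_distrib_right[symmetric] sum_copy_prob mult_1)

lemma step_expectation_mono:
  assumes "0 \<le> \<delta>" "\<delta> \<le> 1" "S \<subseteq> V" "\<And>T. T \<subseteq> V \<Longrightarrow> f T \<le> g T"
  shows "step_expectation V E r \<delta> f S \<le> step_expectation V E r \<delta> g S"
  unfolding step_expectation_def
proof (intro sum_mono mult_left_mono)
  fix u v assume "u \<in> V" "v \<in> nbrs V E u"
  then show "0 \<le> copy_prob V E r \<delta> S u v"
    using copy_prob_pos[OF assms(1,2)] by (simp add: less_imp_le)
  show "f (upd S u v) \<le> g (upd S u v)"
    using assms(4)[OF upd_nbrs_subset[OF assms(3) \<open>v \<in> nbrs V E u\<close>]] .
qed

lemma step_expectation_ge_term:
  assumes "0 \<le> \<delta>" "\<delta> \<le> 1" "S \<subseteq> V" "\<And>T. T \<subseteq> V \<Longrightarrow> 0 \<le> g T"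
    and "u \<in> V" "v \<in> nbrs V E u"
  shows "copy_prob V E r \<delta> S u v * g (upd S u v) \<le> step_expectation V E r \<delta> g S"
proof -
  have nonneg: "0 \<le> copy_prob V E r \<delta> S x y * g (upd S x y)" if "x \<in> V" "y \<in> nbrs V E x" for x y
    using assms(1-4) that copy_prob_pos[OF assms(1,2) that] upd_nbrs_subset[OF assms(3) that(2)]
    by (simp add: less_imp_le)
  have "copy_prob V E r \<delta> S u v * g (upd S u v)
      \<le> (\<Sum>y\<in>nbrs V E u. copy_prob V E r \<delta> S u y * g (upd S u y))"
    using assms(5,6) nonneg finite_nbrs by (intro member_le_sum) auto
  also have "\<dots> \<le> step_expectation V E r \<delta> g S"
    unfolding step_expectation_def
    using assms(5) nonneg finite_V by (intro member_le_sum sum_nonneg) auto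
  finally show ?thesis .
qed

lemma fix_within_nonneg:
  assumes "0 \<le> \<delta>" "\<delta> \<le> 1"
  shows "S \<subseteq> V \<Longrightarrow> 0 \<le> fix_within V E r \<delta> n S"
proof (induction n arbitrary: S)
  case (Suc n)
  then have "step_expectation V E r \<delta> (\<lambda>_. 0) S \<le> step_expectation V E r \<delta> (fix_within V E r \<delta> n) S"
    using assms by (intro step_expectation_mono) auto
  then show ?case
    unfolding fix_within_Suc by (simp add: step_expectation_const)
qed simp

lemma fix_within_le_1:
  assumes "0 \<le> \<delta>" "\<delta> \<le> 1"
  shows "S \<subseteq> V \<Longrightarrow> fix_within V E r \<delta> n S \<le> 1"
proof (induction n arbitrary: S)
  case (Suc n)
  then have "step_expectation V E r \<delta> (fix_within V E r \<delta> n) S \<le> step_expectation V E r \<delta> (\<lambda>_. 1) S"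
    using assms by (intro step_expectation_mono) auto
  then show ?case
    unfolding fix_within_Suc by (simp add: step_expectation_const)
qed simp

lemma fix_within_le_Suc:
  assumes "0 \<le> \<delta>" "\<delta> \<le> 1"
  shows "S \<subseteq> V \<Longrightarrow> fix_within V E r \<delta> n S \<le> fix_within V E r \<delta> (Suc n) S"
proof (induction n arbitrary: S)
  case 0
  have "0 \<le> fix_within V E r \<delta> (Suc 0) S"
    using fix_within_nonneg[OF assms 0] .
  then show ?case
    by (simp add: fix_within_full del: fix_within.simps(2))
next
  case (Suc n)
  then have "step_expectation V E r \<delta> (fix_within V E r \<delta> n) S
      \<le> step_expectation V E r \<delta> (fix_within V E r \<delta> (Suc n)) S"
    using assms by (intro step_expectation_mono) auto
  then show ?case
    unfolding fix_within_Suc by simp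
qed

lemma fix_within_tendsto_fp:
  assumes "0 \<le> \<delta>" "\<delta> \<le> 1" "S \<subseteq> V"
  shows "(\<lambda>n. fix_within V E r \<delta> n S) \<longlonglongrightarrow> fp V E r \<delta> S"
  unfolding fp_def
  using fix_within_le_1[OF assms] fix_within_le_Suc[OF assms(1,2,3)]
  by (intro LIMSEQ_incseq_SUP bdd_aboveI incseq_SucI) auto

lemma fp_fixpoint:
  assumes "0 \<le> \<delta>" "\<delta> \<le> 1" "S \<subseteq> V" "S \<noteq> V"
  shows "fp V E r \<delta> S = step_expectation V E r \<delta> (fp V E r \<delta>) S"
proof (rule LIMSEQ_unique)
  show "(\<lambda>n. fix_within V E r \<delta> (Suc n) S) \<longlonglongrightarrow> fp V E r \<delta> S"
    using fix_within_tendsto_fp[OF assms(1-3)] by (rule LIMSEQ_Suc)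
  have "(\<lambda>n. step_expectation V E r \<delta> (fix_within V E r \<delta> n) S)
      \<longlonglongrightarrow> step_expectation V E r \<delta> (fp V E r \<delta>) S"
    using fix_within_tendsto_fp[OF assms(1,2)] assms(3) by (rule step_expectation_tendsto)
  then show "(\<lambda>n. fix_within V E r \<delta> (Suc n) S) \<longlonglongrightarrow> step_expectation V E r \<delta> (fp V E r \<delta>) S"
    unfolding fix_within_Suc using assms(4) by simp
qed

text \<open>The two halves of the transition probabilities pair off crosswise: the death-Birth term
  of v copying onto u is dominated by the Birth-death term of u copying onto v, and vice versa.
  This is where \<open>\<delta> = 1/2\<close> is needed.\<close>

lemma copy_prob_mutant_dominates:
  assumes "1 \<le> r" "u \<in> V" "v \<in> V" "u \<in> S" "v \<notin> S"
  shows "copy_prob V E r (1/2) S v u \<le> copy_prob V E r (1/2) S u v"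
proof -
  let ?N = "real (card V)"
  let ?F = "\<Sum>w\<in>V. fit r S w"
  let ?W = "\<lambda>x. \<Sum>w\<in>nbrs V E x. fit r S w"
  let ?d = "\<lambda>x. real (card (nbrs V E x))"
  have N_pos: "0 < ?N" using finite_V V_nonempty by (simp add: card_gt_0_iff)
  have "?F * ?d u \<le> (r * ?N) * ?W u"
    using sum_fit_le[OF assms(1), of S V] card_le_sum_fit[OF assms(1), of "nbrs V E u" S] N_pos assms(1)
    by (intro mult_mono) auto
  then have uv: "1 / ?N * (1 / ?W u) \<le> r / ?F * (1 / ?d u)"
    using N_pos sum_fit_nbrs_pos[OF assms(2), of S] sum_fit_pos[of S] card_nbrs_pos[OF assms(2)]
    by (simp add: field_simps)
  have "?N * ?W v \<le> ?F * (r * ?d v)"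
    using card_le_sum_fit[OF assms(1), of V S] sum_fit_le[OF assms(1), of S "nbrs V E v"]
      sum_fit_nbrs_pos[OF assms(3), of S] N_pos
    by (intro mult_mono) auto
  then have vu: "1 / ?F * (1 / ?d v) \<le> 1 / ?N * (r / ?W v)"
    using N_pos sum_fit_nbrs_pos[OF assms(3), of S] sum_fit_pos[of S] card_nbrs_pos[OF assms(3)]
    by (simp add: field_simps)
  have "copy_prob V E r (1/2) S v u = 1/2 * (1 / ?N * (1 / ?W u)) + 1/2 * (1 / ?F * (1 / ?d v))"
    using assms(5) by (simp add: copy_prob_def fit_def)
  moreover have "copy_prob V E r (1/2) S u v = 1/2 * (1 / ?N * (r / ?W v)) + 1/2 * (r / ?F * (1 / ?d u))"
    using assms(4) by (simp add: copy_prob_def fit_def)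
  ultimately show ?thesis
    using uv vu by linarith
qed

lemma sum_nbrs_net_flow:
  fixes c :: "'a \<Rightarrow> 'a \<Rightarrow> real"
  shows "(\<Sum>u\<in>V. \<Sum>v\<in>nbrs V E u. c u v * (of_bool (u \<in> S \<and> v \<notin> S) - of_bool (v \<in> S \<and> u \<notin> S)))
       = (\<Sum>u\<in>V. \<Sum>v\<in>nbrs V E u. of_bool (u \<in> S \<and> v \<notin> S) * (c u v - c v u))"
proof -
  have "(\<Sum>u\<in>V. \<Sum>v\<in>nbrs V E u. c u v * (of_bool (u \<in> S \<and> v \<notin> S) - of_bool (v \<in> S \<and> u \<notin> S)))
      = (\<Sum>u\<in>V. \<Sum>v\<in>nbrs V E u. of_bool (u \<in> S \<and> v \<notin> S) * c u v)
      - (\<Sum>u\<in>V. \<Sum>v\<in>nbrs V E u. of_bool (v \<in> S \<and> u \<notin> S) * c u v)"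
    unfolding sum_subtractf[symmetric] by (intro sum.cong refl) (simp add: algebra_simps)
  also have "(\<Sum>u\<in>V. \<Sum>v\<in>nbrs V E u. of_bool (v \<in> S \<and> u \<notin> S) * c u v)
      = (\<Sum>u\<in>V. \<Sum>v\<in>nbrs V E u. of_bool (u \<in> S \<and> v \<notin> S) * c v u)"
    by (rule sum_nbrs_swap[symmetric])
  also have "(\<Sum>u\<in>V. \<Sum>v\<in>nbrs V E u. of_bool (u \<in> S \<and> v \<notin> S) * c u v)
      - (\<Sum>u\<in>V. \<Sum>v\<in>nbrs V E u. of_bool (u \<in> S \<and> v \<notin> S) * c v u)
      = (\<Sum>u\<in>V. \<Sum>v\<in>nbrs V E u. of_bool (u \<in> S \<and> v \<notin> S) * (c u v - c v u))"
    unfolding sum_subtractf[symmetric] by (intro sum.cong refl) (simp add: algebra_simps)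
  finally show ?thesis .
qed

lemma mutant_fraction_submartingale:
  assumes "1 \<le> r" "S \<subseteq> V"
  shows "real (card S) / real (card V)
    \<le> step_expectation V E r (1/2) (\<lambda>T. real (card T) / real (card V)) S"
proof -
  let ?N = "real (card V)"
  let ?\<psi> = "\<lambda>T. real (card T) / ?N"
  let ?p = "copy_prob V E r (1/2) S"
  have "finite S" using finite_subset[OF assms(2) finite_V] .
  have "step_expectation V E r (1/2) ?\<psi> S - ?\<psi> S
      = step_expectation V E r (1/2) (\<lambda>T. ?\<psi> T - ?\<psi> S) S"
    using step_expectation_diff[of V E r "1/2" ?\<psi> S "\<lambda>_. ?\<psi> S"] by (simp add: step_expectation_const)
  also have "\<dots> = (\<Sum>u\<in>V. \<Sum>v\<in>nbrs V E u.
      ?p u v * (of_bool (u \<in> S \<and> v \<notin> S) - of_bool (v \<in> S \<and> u \<notin> S))) / ?N"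
    unfolding step_expectation_def sum_divide_distrib
  proof (intro sum.cong refl)
    fix u v assume "v \<in> nbrs V E u"
    then have "u \<noteq> v" using edge_irrefl by (auto simp: nbrs_def)
    then show "?p u v * (?\<psi> (upd S u v) - ?\<psi> S)
        = ?p u v * (of_bool (u \<in> S \<and> v \<notin> S) - of_bool (v \<in> S \<and> u \<notin> S)) / ?N"
      using card_upd[OF \<open>finite S\<close>] by (simp add: diff_divide_distrib[symmetric])
  qed
  also have "\<dots> = (\<Sum>u\<in>V. \<Sum>v\<in>nbrs V E u. of_bool (u \<in> S \<and> v \<notin> S) * (?p u v - ?p v u)) / ?N"
    by (simp only: sum_nbrs_net_flow)
  also have "\<dots> \<ge> 0"
  proof (intro divide_nonneg_nonneg sum_nonneg)
    fix u v assume "u \<in> V" "v \<in> nbrs V E u"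
    then show "0 \<le> of_bool (u \<in> S \<and> v \<notin> S) * (?p u v - ?p v u)"
      using copy_prob_mutant_dominates[OF assms(1) \<open>u \<in> V\<close>] by (auto simp: nbrs_def)
  qed simp
  finally show ?thesis by simp
qed

lemma subharmonic_max_propagates:
  assumes "0 \<le> \<delta>" "\<delta> \<le> 1"
    and max: "\<And>T. T \<subseteq> V \<Longrightarrow> D T \<le> D S" and "S \<subseteq> V"
    and sub: "D S \<le> step_expectation V E r \<delta> D S"
    and "u \<in> V" "v \<in> nbrs V E u"
  shows "D (upd S u v) = D S"
proof -
  let ?g = "\<lambda>T. D S - D T"
  have "copy_prob V E r \<delta> S u v * ?g (upd S u v) \<le> step_expectation V E r \<delta> ?g S"
    using assms by (intro step_expectation_ge_term) auto
  also have "\<dots> = D S - step_expectation V E r \<delta> D S"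
    using step_expectation_diff[of V E r \<delta> "\<lambda>_. D S" S D] by (simp add: step_expectation_const)
  also have "\<dots> \<le> 0"
    using sub by simp
  finally have "?g (upd S u v) \<le> 0"
    using copy_prob_pos[OF assms(1,2,6,7), of S] by (simp add: mult_le_0_iff)
  then show ?thesis
    using max[OF upd_nbrs_subset[OF assms(4,7)]] by simp
qed

lemma subharmonic_nonpos:
  assumes "connected_graph V E" "0 \<le> \<delta>" "\<delta> \<le> 1"
    and "D V \<le> 0" "D {} \<le> 0"
    and sub: "\<And>S. S \<subseteq> V \<Longrightarrow> S \<noteq> V \<Longrightarrow> D S \<le> step_expectation V E r \<delta> D S"
    and "S0 \<subseteq> V"
  shows "D S0 \<le> 0"
proof -
  define M where "M = Max (D ` Pow V)"
  have "finite (D ` Pow V)" using finite_V by simp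
  then have M_max: "\<And>T. T \<subseteq> V \<Longrightarrow> D T \<le> M" and "M \<in> D ` Pow V"
    unfolding M_def by (auto intro: Max_ge Max_in)
  then obtain S1 where "S1 \<subseteq> V \<and> D S1 = M" by auto
  moreover have "\<forall>T. T \<subseteq> V \<and> D T = M \<longrightarrow> card T < Suc (card V)"
    using card_mono[OF finite_V] by (simp add: le_imp_less_Suc)
  ultimately have "\<exists>S. (S \<subseteq> V \<and> D S = M) \<and> (\<forall>T. T \<subseteq> V \<and> D T = M \<longrightarrow> card T \<le> card S)"
    by (rule Lattices_Big.ex_has_greatest_nat)
  then obtain S where S: "S \<subseteq> V" "D S = M"
    and S_largest: "\<And>T. T \<subseteq> V \<Longrightarrow> D T = M \<Longrightarrow> card T \<le> card S"
    by blast
  have "M \<le> 0"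
  proof (cases "S = V \<or> S = {}")
    case True
    then show ?thesis using S assms(4,5) by auto
  next
    case False
    then obtain u v where "u \<in> S" "v \<in> V - S" "E u v"
      using connected_graph_boundary_edge[OF assms(1) S(1)] by blast
    then have "u \<in> V" "v \<in> nbrs V E u" using S(1) by (auto simp: nbrs_def)
    moreover have "D S \<le> step_expectation V E r \<delta> D S"
      using sub S(1) False by blast
    ultimately have "D (upd S u v) = M"
      using subharmonic_max_propagates[OF assms(2,3), of D S] S M_max by simp
    moreover have "upd S u v = insert v S"
      using \<open>u \<in> S\<close> by (simp add: upd_def)
    ultimately have "card (insert v S) \<le> card S"
      using S_largest S(1) \<open>v \<in> V - S\<close> by simp
    then show ?thesis
      using \<open>v \<in> V - S\<close> finite_subset[OF S(1) finite_V] by simp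
  qed
  then show ?thesis
    using M_max[OF assms(7)] by simp
qed

lemma fp_ge_mutant_fraction:
  assumes "connected_graph V E" "1 \<le> r" "S0 \<subseteq> V"
  shows "real (card S0) / real (card V) \<le> fp V E r (1/2) S0"
proof -
  let ?\<psi> = "\<lambda>T. real (card T) / real (card V)"
  let ?L = "fp V E r (1/2)"
  have "?\<psi> S0 - ?L S0 \<le> 0"
  proof (rule subharmonic_nonpos[OF assms(1)])
    show "?\<psi> V - ?L V \<le> 0"
      using finite_V V_nonempty by (simp add: fp_full)
    show "?\<psi> {} - ?L {} \<le> 0"
      using V_nonempty by (simp add: fp_empty)
    fix S assume "S \<subseteq> V" "S \<noteq> V"
    have "?\<psi> S - ?L S \<le> step_expectation V E r (1/2) ?\<psi> S - step_expectation V E r (1/2) ?L S"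
      using mutant_fraction_submartingale[OF assms(2) \<open>S \<subseteq> V\<close>] fp_fixpoint[OF _ _ \<open>S \<subseteq> V\<close> \<open>S \<noteq> V\<close>]
      by simp
    then show "?\<psi> S - ?L S \<le> step_expectation V E r (1/2) (\<lambda>T. ?\<psi> T - ?L T) S"
      by (simp only: step_expectation_diff)
  qed (use assms(3) in simp_all)
  then show ?thesis by simp
qed

end

theorem mainTheorem14:
  fixes V :: "'a set" and E :: "'a \<Rightarrow> 'a \<Rightarrow> bool" and S0 :: "'a set" and r :: real
  assumes "finite V" and "V \<noteq> {}"
    and "\<And>x y. E x y \<Longrightarrow> x \<in> V \<and> y \<in> V"
    and "\<And>x y. E x y \<Longrightarrow> E y x"
    and "\<And>x. \<not> E x x"
    and "connected_graph V E"
    and "S0 \<subseteq> V"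
    and "r > 1"
  shows "fp V E r (1/2) S0 \<ge> real (card S0) / real (card V)"
proof (cases "S0 = {} \<or> S0 = V")
  case True
  then show ?thesis
    using assms(1,2) by (elim disjE) (simp_all add: fp_empty fp_full)
next
  case False
  then obtain x y where "x \<in> V" "y \<in> V" "x \<noteq> y"
    using assms(7) by blast
  then have "nbrs V E z \<noteq> {}" if "z \<in> V" for z
    using connected_graph_nbrs_nonempty[OF assms(6) that] by metis
  then interpret moran_graph V E r
    using assms(1,2,4,5,8) by unfold_locales auto
  show ?thesis
    using fp_ge_mutant_fraction assms(6-8) by simp
qed

end
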